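(* Let $K\ge 4$ and let $X$ be $\mathbb{R}^2$ with a norm $\|\cdot\|_X$ whose closed unit ball $BX$ is a symmetric convex polygon with $2K$ sides, written as $BX=\bigcap_{k=1}^K\{x:|x\cdot b_k|\le 1\}$ for vectors $b_1,\dots,b_K\in\mathbb{R}^2$. Then there are constants $C,c>0$ and arbitrarily large integers $n$ for which there exist sets $A=A(n)\subset B(0,1/2)$ with $|A|=n$ such that $$|(A-A)\cdot b_k|\le C n^{1-1/K},\quad k=1,\dots,K$$ (in particular $|\Delta_X(A)|\le C' n^{1-1/K}$ for a constant $C'$ independent of $n$), and $$\|x-x'\|_X\ge c\, n^{-1/2}\quad\text{for all } x,x'\in A,\ x\ne x'.$$
   Context: $B(x,r)$ is the closed Euclidean ball of center $x$ and radius $r$; $|A|$ is the cardinality of a finite set; $A-A=\{a-a':a,a'\in A\}$, $A\cdot v=\{a\cdot v: a\in A\}$; $\Delta_X(A)=\{\|x-x'\|_X:x,x'\in A\}$. The constants are independent of $n$. *)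

theory Defs
  imports "HOL-Analysis.Analysis"
begin

definition is_norm_fun :: "(real^2 \<Rightarrow> real) \<Rightarrow> bool" where
  "is_norm_fun N \<longleftrightarrow>
     (\<forall>x. N x \<ge> 0) \<and> (\<forall>x. N x = 0 \<longleftrightarrow> x = 0) \<and>
     (\<forall>a x. N (a *\<^sub>R x) = \<bar>a\<bar> * N x) \<and> (\<forall>x y. N (x + y) \<le> N x + N y)"

end

theory Submission
  imports Defs
begin

(* Let u_0, ..., u_(r-1) (2 <= r <= K) be the pairwise non-parallel directions among the b_k,
   indexed cyclically, and let U_i be u_i rotated by a right angle. A consists of the
   n = M^(2r) points  sum_(i<r) tau^(i+1) (x_i U_i + y_i U_(i+1))  with digits x_i, y_i < M.
   Level i is a box in the lattice spanned by U_i and U_(i+1); since ||x|| = max_k |x . b_k|,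
   its nonzero points have norm at least sigma = min_i |det (u_i, u_(i+1))|. For tau ~ 1/M small
   enough, the first level at which two points differ dominates all later ones, so distinct
   points are at distance >~ tau^r ~ n^(-1/2). Each b_k is parallel to some u_j, and
   U_j . b_k = 0 kills one digit on each of the levels j and j - 1, so (A - A) . b_k takes at
   most (2M + 1)^(2r-2) <~ n^(1-1/r) values. Every distance ||x - x'|| is one of the
   |(x - x') . b_k|. *)

definition det2 :: "real^2 \<Rightarrow> real^2 \<Rightarrow> real" where
  "det2 u v = u$1 * v$2 - u$2 * v$1"

definition perp :: "real^2 \<Rightarrow> real^2" where
  "perp u = vector [- u$2, u$1]"

lemma inner_perp: "perp u \<bullet> v = det2 u v"
  by (simp add: perp_def det2_def inner_vec_def sum_2)

lemma det2_swap: "det2 u v = - det2 v u"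
  by (simp add: det2_def)

lemma det2_self [simp]: "det2 u u = 0"
  by (simp add: det2_def)

lemma det2_zero_right [simp]: "det2 u 0 = 0"
  by (simp add: det2_def)

lemma perp_eq_0_iff [simp]: "perp u = 0 \<longleftrightarrow> u = 0"
  by (auto simp: perp_def vec_eq_iff forall_2)

lemma Suc_mod_neq_self:
  assumes "2 \<le> r" "i < r"
  shows "Suc i mod r \<noteq> i"
proof (cases "Suc i < r")
  case False
  then have "Suc i = r" using assms(2) by simp
  then show ?thesis using assms(1) by simp
qed simp

lemma direction_representatives:
  fixes u :: "'i \<Rightarrow> real^2"
  assumes "finite I"
  obtains R where "R \<subseteq> I" "\<And>j. j \<in> R \<Longrightarrow> u j \<noteq> 0"
    "\<And>i j. i \<in> R \<Longrightarrow> j \<in> R \<Longrightarrow> i \<noteq> j \<Longrightarrow> det2 (u i) (u j) \<noteq> 0"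
    "\<And>k. k \<in> I \<Longrightarrow> u k \<noteq> 0 \<Longrightarrow> \<exists>j\<in>R. det2 (u j) (u k) = 0"
proof -
  have "\<exists>R. R \<subseteq> I \<and> (\<forall>j\<in>R. u j \<noteq> 0) \<and> (\<forall>i\<in>R. \<forall>j\<in>R. i \<noteq> j \<longrightarrow> det2 (u i) (u j) \<noteq> 0) \<and>
           (\<forall>k\<in>I. u k \<noteq> 0 \<longrightarrow> (\<exists>j\<in>R. det2 (u j) (u k) = 0))"
    using assms
  proof (induction I rule: finite_induct)
    case (insert k I)
    then obtain R where R: "R \<subseteq> I" "\<forall>j\<in>R. u j \<noteq> 0"
        "\<forall>i\<in>R. \<forall>j\<in>R. i \<noteq> j \<longrightarrow> det2 (u i) (u j) \<noteq> 0"
        "\<forall>k\<in>I. u k \<noteq> 0 \<longrightarrow> (\<exists>j\<in>R. det2 (u j) (u k) = 0)"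
      by blast
    show ?case
    proof (cases "u k = 0 \<or> (\<exists>j\<in>R. det2 (u j) (u k) = 0)")
      case True
      then show ?thesis using R by (intro exI[of _ R]) auto
    next
      case False
      then have "det2 (u j) (u k) \<noteq> 0" "det2 (u k) (u j) \<noteq> 0" if "j \<in> R" for j
        using that det2_swap[of "u k" "u j"] by auto
      then show ?thesis using R False by (intro exI[of _ "insert k R"]) auto
    qed
  qed simp
  then show thesis using that by auto
qed

locale norm_fun =
  fixes N :: "real^2 \<Rightarrow> real"
  assumes is_norm_fun: "is_norm_fun N"
begin

lemma N_nonneg: "0 \<le> N x"
  using is_norm_fun by (simp add: is_norm_fun_def)

lemma N_eq_0_iff: "N x = 0 \<longleftrightarrow> x = 0"
  using is_norm_fun by (simp add: is_norm_fun_def)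

lemma N_scaleR: "N (a *\<^sub>R x) = \<bar>a\<bar> * N x"
  using is_norm_fun by (simp add: is_norm_fun_def)

lemma N_triangle: "N (x + y) \<le> N x + N y"
  using is_norm_fun by (simp add: is_norm_fun_def)

lemma N_zero [simp]: "N 0 = 0"
  by (simp add: N_eq_0_iff)

lemma N_pos: "x \<noteq> 0 \<Longrightarrow> 0 < N x"
  using N_nonneg N_eq_0_iff by (metis less_eq_real_def)

lemma N_minus: "N (- x) = N x"
  using N_scaleR[of "-1" x] by simp

lemma N_triangle_reverse: "N x \<le> N (x + y) + N y"
  using N_triangle[of "x + y" "- y"] by (simp add: N_minus)

lemma N_sum_le: "N (sum f A) \<le> (\<Sum>i\<in>A. N (f i))"
proof (induction A rule: infinite_finite_induct)
  case (insert a A)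
  then show ?case using N_triangle[of "f a" "sum f A"] by simp
qed simp_all

end

interpretation euclidean: norm_fun norm
  by unfold_locales (simp add: is_norm_fun_def norm_triangle_ineq)

locale polygon_norm = norm_fun +
  fixes I :: "'i set" and b :: "'i \<Rightarrow> real^2"
  assumes finite_I: "finite I" and I_nonempty: "I \<noteq> {}"
    and unit_ball: "{x. N x \<le> 1} = (\<Inter>k\<in>I. {x. \<bar>x \<bullet> b k\<bar> \<le> 1})"
begin

lemma N_le_1_iff: "N x \<le> 1 \<longleftrightarrow> (\<forall>k\<in>I. \<bar>x \<bullet> b k\<bar> \<le> 1)"
  using unit_ball by blast

lemma N_eq_Max: "N x = (MAX k\<in>I. \<bar>x \<bullet> b k\<bar>)"
proof (rule antisym)
  define m where "m = (MAX k\<in>I. \<bar>x \<bullet> b k\<bar>)"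
  have m_ge: "\<bar>x \<bullet> b k\<bar> \<le> m" if "k \<in> I" for k
    using finite_I that by (simp add: m_def)
  show "N x \<le> m"
  proof (cases "m = 0")
    case True
    show ?thesis
    proof (rule ccontr)
      assume "\<not> N x \<le> m"
      then have "0 < N x" using True by simp
      moreover have "N ((2 / N x) *\<^sub>R x) \<le> 1"
        using m_ge True by (simp add: N_le_1_iff)
      ultimately show False by (simp add: N_scaleR)
    qed
  next
    case False
    obtain k where "k \<in> I" using I_nonempty by blast
    then have "0 < m" using m_ge[of k] False by linarith
    have "\<bar>((1 / m) *\<^sub>R x) \<bullet> b k\<bar> \<le> 1" if "k \<in> I" for k
      using m_ge[OF that] \<open>0 < m\<close> by (simp add: abs_mult)
    then have "N ((1 / m) *\<^sub>R x) \<le> 1" by (simp add: N_le_1_iff)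
    then show ?thesis using \<open>0 < m\<close> by (simp add: N_scaleR)
  qed
  have "\<bar>x \<bullet> b k\<bar> \<le> N x" if "k \<in> I" for k
  proof (cases "x = 0")
    case False
    then have "N ((1 / N x) *\<^sub>R x) \<le> 1" using N_pos[of x] by (simp add: N_scaleR)
    then have "\<bar>((1 / N x) *\<^sub>R x) \<bullet> b k\<bar> \<le> 1" using that by (simp add: N_le_1_iff)
    then show ?thesis using N_pos[OF False] by (simp add: abs_mult)
  qed simp
  then show "m \<le> N x" using finite_I I_nonempty by (simp add: m_def)
qed

lemma abs_inner_le_N: "k \<in> I \<Longrightarrow> \<bar>x \<bullet> b k\<bar> \<le> N x"
  using finite_I by (simp add: N_eq_Max)

lemma N_attained: "\<exists>k\<in>I. N x = \<bar>x \<bullet> b k\<bar>"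
proof -
  have "N x \<in> (\<lambda>k. \<bar>x \<bullet> b k\<bar>) ` I"
    unfolding N_eq_Max using finite_I I_nonempty by (intro Max_in) auto
  then show ?thesis by auto
qed

lemma orthogonal_all_imp_eq_0: "(\<And>k. k \<in> I \<Longrightarrow> x \<bullet> b k = 0) \<Longrightarrow> x = 0"
  using N_attained[of x] by (auto simp: N_eq_0_iff[symmetric])

lemma perp_lattice_lower_bound:
  assumes "p \<in> I" "q \<in> I" "a \<in> \<int>" "c \<in> \<int>" "(a, c) \<noteq> (0, 0)"
  shows "\<bar>det2 (b p) (b q)\<bar> \<le> N (a *\<^sub>R perp (b p) + c *\<^sub>R perp (b q))"
proof (cases "a = 0")
  case False
  then have "1 \<le> \<bar>a\<bar>" using \<open>a \<in> \<int>\<close> by (simp add: Ints_nonzero_abs_ge1)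
  then have "\<bar>det2 (b p) (b q)\<bar> \<le> \<bar>a * det2 (b p) (b q)\<bar>"
    by (simp add: abs_mult mult_le_cancel_right1)
  also have "a * det2 (b p) (b q) = (a *\<^sub>R perp (b p) + c *\<^sub>R perp (b q)) \<bullet> b q"
    by (simp add: inner_add_left inner_perp)
  also have "\<bar>\<dots>\<bar> \<le> N (a *\<^sub>R perp (b p) + c *\<^sub>R perp (b q))"
    using \<open>q \<in> I\<close> by (rule abs_inner_le_N)
  finally show ?thesis .
next
  case True
  then have "1 \<le> \<bar>c\<bar>" using assms(4,5) by (simp add: Ints_nonzero_abs_ge1)
  then have "\<bar>det2 (b p) (b q)\<bar> \<le> \<bar>c * det2 (b q) (b p)\<bar>"
    by (simp add: abs_mult mult_le_cancel_right1 det2_swap[of "b q"])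
  also have "c * det2 (b q) (b p) = (a *\<^sub>R perp (b p) + c *\<^sub>R perp (b q)) \<bullet> b p"
    using True by (simp add: inner_perp)
  also have "\<bar>\<dots>\<bar> \<le> N (a *\<^sub>R perp (b p) + c *\<^sub>R perp (b q))"
    using \<open>p \<in> I\<close> by (rule abs_inner_le_N)
  finally show ?thesis .
qed

lemma card_distances_le:
  assumes "finite A"
    and proj: "\<And>k. k \<in> I \<Longrightarrow> real (card {(x - x') \<bullet> b k | x x'. x \<in> A \<and> x' \<in> A}) \<le> L"
  shows "real (card {N (x - x') | x x'. x \<in> A \<and> x' \<in> A}) \<le> real (card I) * L"
proof -
  define P where "P k = {(x - x') \<bullet> b k | x x'. x \<in> A \<and> x' \<in> A}" for k
  have "finite (P k)" for k
  proof -
    have "P k = (\<lambda>(x, x'). (x - x') \<bullet> b k) ` (A \<times> A)" unfolding P_def by auto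
    then show ?thesis using assms by simp
  qed
  moreover have "{N (x - x') | x x'. x \<in> A \<and> x' \<in> A} \<subseteq> (\<Union>k\<in>I. abs ` P k)"
  proof
    fix v assume "v \<in> {N (x - x') | x x'. x \<in> A \<and> x' \<in> A}"
    then obtain x x' where "x \<in> A" "x' \<in> A" and v: "v = N (x - x')" by blast
    then have "(x - x') \<bullet> b k \<in> P k" for k unfolding P_def by blast
    moreover obtain k where "k \<in> I" "v = \<bar>(x - x') \<bullet> b k\<bar>" using N_attained v by blast
    ultimately show "v \<in> (\<Union>k\<in>I. abs ` P k)" by blast
  qed
  ultimately have "card {N (x - x') | x x'. x \<in> A \<and> x' \<in> A} \<le> card (\<Union>k\<in>I. abs ` P k)"
    using finite_I by (intro card_mono) auto
  also have "\<dots> \<le> (\<Sum>k\<in>I. card (abs ` P k))"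
    by (rule card_UN_le[OF finite_I])
  also have "\<dots> \<le> (\<Sum>k\<in>I. card (P k))"
    by (intro sum_mono card_image_le \<open>finite (P _)\<close>)
  finally have "real (card {N (x - x') | x x'. x \<in> A \<and> x' \<in> A}) \<le> (\<Sum>k\<in>I. real (card (P k)))"
    by (simp only: of_nat_le_iff of_nat_sum[symmetric])
  also have "\<dots> \<le> (\<Sum>k\<in>I. L)"
    by (rule sum_mono) (use proj in \<open>simp add: P_def\<close>)
  finally show ?thesis by simp
qed

lemma two_le_card_directions:
  assumes "finite R" and nonzero: "\<And>j. j \<in> R \<Longrightarrow> b j \<noteq> 0"
    and cover: "\<And>k. k \<in> I \<Longrightarrow> b k \<noteq> 0 \<Longrightarrow> \<exists>j\<in>R. det2 (b j) (b k) = 0"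
  shows "2 \<le> card R"
proof (rule ccontr)
  assume "\<not> 2 \<le> card R"
  then have R_le_1: "card R \<le> Suc 0" by simp
  obtain x where "x \<noteq> 0" "\<And>k. k \<in> I \<Longrightarrow> x \<bullet> b k = 0"
  proof (cases "R = {}")
    case True
    then have "b k = 0" if "k \<in> I" for k using cover[OF that] by blast
    then show thesis by (intro that[of "axis 1 1"]) auto
  next
    case False
    then obtain p where "p \<in> R" by blast
    then have "R = {p}" using R_le_1 \<open>finite R\<close> by (auto simp: card_le_Suc0_iff_eq)
    then have "det2 (b p) (b k) = 0" if "k \<in> I" for k
      using cover[OF that] by (cases "b k = 0") auto
    then show thesis using nonzero \<open>p \<in> R\<close> by (intro that[of "perp (b p)"]) (auto simp: inner_perp)
  qed
  then show False using orthogonal_all_imp_eq_0 by blast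
qed

lemma cyclic_directions:
  obtains r :: nat and e :: "nat \<Rightarrow> 'i" where "2 \<le> r" "r \<le> card I" "\<And>i. i < r \<Longrightarrow> e i \<in> I"
    "\<And>i. i < r \<Longrightarrow> det2 (b (e i)) (b (e (Suc i mod r))) \<noteq> 0"
    "\<And>k. k \<in> I \<Longrightarrow> \<exists>j<r. det2 (b (e j)) (b k) = 0"
proof -
  obtain R where R: "R \<subseteq> I" "\<And>j. j \<in> R \<Longrightarrow> b j \<noteq> 0"
      "\<And>i j. i \<in> R \<Longrightarrow> j \<in> R \<Longrightarrow> i \<noteq> j \<Longrightarrow> det2 (b i) (b j) \<noteq> 0"
      "\<And>k. k \<in> I \<Longrightarrow> b k \<noteq> 0 \<Longrightarrow> \<exists>j\<in>R. det2 (b j) (b k) = 0"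
    using direction_representatives[OF finite_I, of b] by blast
  have "finite R" using R(1) finite_I by (rule finite_subset)
  have "2 \<le> card R" using \<open>finite R\<close> R(2,4) by (rule two_le_card_directions)
  obtain e where e: "bij_betw e {0..<card R} R"
    using ex_bij_betw_nat_finite[OF \<open>finite R\<close>] by blast
  have e_in: "e i \<in> R" if "i < card R" for i
    using bij_betw_apply[OF e] that by simp
  show thesis
  proof (rule that[of "card R" e, OF \<open>2 \<le> card R\<close>])
    show "card R \<le> card I" using R(1) finite_I by (rule card_mono[rotated])
    show "e i \<in> I" if "i < card R" for i
      using e_in[OF that] R(1) by blast
    show "det2 (b (e i)) (b (e (Suc i mod card R))) \<noteq> 0" if "i < card R" for i
    proof -
      have "Suc i mod card R < card R" using \<open>2 \<le> card R\<close> by simp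
      then have "e (Suc i mod card R) \<noteq> e i"
        using that Suc_mod_neq_self[OF \<open>2 \<le> card R\<close> that]
          inj_onD[OF bij_betw_imp_inj_on[OF e], of "Suc i mod card R" i] by auto
      then show ?thesis
        using R(3)[OF e_in[OF that] e_in[OF \<open>Suc i mod card R < card R\<close>]] by auto
    qed
    show "\<exists>j<card R. det2 (b (e j)) (b k) = 0" if k: "k \<in> I" for k
    proof (cases "b k = 0")
      case True
      then show ?thesis using \<open>2 \<le> card R\<close> by (intro exI[of _ 0]) auto
    next
      case False
      then obtain p where "p \<in> R" "det2 (b p) (b k) = 0" using R(4)[OF k] by blast
      moreover have "p \<in> e ` {0..<card R}" using e \<open>p \<in> R\<close> by (simp add: bij_betw_def)
      ultimately show ?thesis by auto
    qed
  qed
qed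

lemma cyclic_perp_frame:
  obtains r :: nat and U :: "nat \<Rightarrow> real^2" and \<sigma> :: real where "2 \<le> r" "r \<le> card I" "0 < \<sigma>"
    "\<And>i a c. i < r \<Longrightarrow> a \<in> \<int> \<Longrightarrow> c \<in> \<int> \<Longrightarrow> (a, c) \<noteq> (0, 0) \<Longrightarrow>
       \<sigma> \<le> N (a *\<^sub>R U i + c *\<^sub>R U (Suc i mod r))"
    "\<And>k. k \<in> I \<Longrightarrow> \<exists>j<r. U j \<bullet> b k = 0"
proof -
  obtain r e where r: "2 \<le> r" "r \<le> card I" and e: "\<And>i. i < r \<Longrightarrow> e i \<in> I"
    and indep: "\<And>i. i < r \<Longrightarrow> det2 (b (e i)) (b (e (Suc i mod r))) \<noteq> 0"
    and cover: "\<And>k. k \<in> I \<Longrightarrow> \<exists>j<r. det2 (b (e j)) (b k) = 0"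
    by (rule cyclic_directions) (rule that)
  define \<sigma> where "\<sigma> = (MIN i\<in>{..<r}. \<bar>det2 (b (e i)) (b (e (Suc i mod r)))\<bar>)"
  show thesis
  proof (rule that[OF r, of \<sigma> "\<lambda>i. perp (b (e i))"])
    show "0 < \<sigma>" unfolding \<sigma>_def using r indep by (subst Min_gr_iff) (auto simp: lessThan_empty_iff)
    show "\<sigma> \<le> N (a *\<^sub>R perp (b (e i)) + c *\<^sub>R perp (b (e (Suc i mod r))))"
      if "i < r" "a \<in> \<int>" "c \<in> \<int>" "(a, c) \<noteq> (0, 0)" for i a c
    proof -
      have "\<sigma> \<le> \<bar>det2 (b (e i)) (b (e (Suc i mod r)))\<bar>"
        unfolding \<sigma>_def using that(1) by (intro Min_le) auto
      also have "\<dots> \<le> N (a *\<^sub>R perp (b (e i)) + c *\<^sub>R perp (b (e (Suc i mod r))))"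
        using that e r by (intro perp_lattice_lower_bound) auto
      finally show ?thesis .
    qed
    show "\<exists>j<r. perp (b (e j)) \<bullet> b k = 0" if "k \<in> I" for k
      using cover[OF that] by (simp add: inner_perp)
  qed
qed

end

definition grid_point ::
    "real \<Rightarrow> nat \<Rightarrow> (nat \<Rightarrow> real^2) \<Rightarrow> (nat \<Rightarrow> real^2) \<Rightarrow> (nat \<Rightarrow> real) \<Rightarrow> (nat \<Rightarrow> real) \<Rightarrow> real^2" where
  "grid_point \<tau> r U V x y = (\<Sum>i<r. \<tau> ^ Suc i *\<^sub>R (x i *\<^sub>R U i + y i *\<^sub>R V i))"

definition digits :: "nat \<Rightarrow> nat \<Rightarrow> (nat \<Rightarrow> real) set" where
  "digits r M = {..<r} \<rightarrow>\<^sub>E real ` {..<M}"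

definition grid :: "real \<Rightarrow> nat \<Rightarrow> (nat \<Rightarrow> real^2) \<Rightarrow> (nat \<Rightarrow> real^2) \<Rightarrow> nat \<Rightarrow> (real^2) set" where
  "grid \<tau> r U V M = (\<lambda>(x, y). grid_point \<tau> r U V x y) ` (digits r M \<times> digits r M)"

lemma gridE:
  assumes "p \<in> grid \<tau> r U V M"
  obtains x y where "x \<in> digits r M" "y \<in> digits r M" "p = grid_point \<tau> r U V x y"
  using assms unfolding grid_def by auto

lemma grid_point_diff:
  "grid_point \<tau> r U V x y - grid_point \<tau> r U V x' y' =
     grid_point \<tau> r U V (\<lambda>i. x i - x' i) (\<lambda>i. y i - y' i)"
  unfolding grid_point_def sum_subtractf[symmetric]
  by (rule sum.cong) (simp_all add: algebra_simps)

lemma grid_point_split: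
  assumes "i < r"
  shows "grid_point \<tau> r U V x y =
           \<tau> ^ Suc i *\<^sub>R (x i *\<^sub>R U i + y i *\<^sub>R V i) + grid_point \<tau> r U V (x(i := 0)) (y(i := 0))"
proof -
  have "grid_point \<tau> r U V (x(i := 0)) (y(i := 0)) =
          (\<Sum>j\<in>{..<r} - {i}. \<tau> ^ Suc j *\<^sub>R (x j *\<^sub>R U j + y j *\<^sub>R V j))"
    unfolding grid_point_def using assms by (subst sum.remove[of _ i]) (auto intro!: sum.cong)
  then show ?thesis
    unfolding grid_point_def using assms by (simp add: sum.remove[of _ i])
qed

lemma digits_nat: "x \<in> digits r M \<Longrightarrow> i < r \<Longrightarrow> \<exists>a<M. x i = real a"
  by (auto simp: digits_def PiE_iff)

lemma digits_abs_le: "x \<in> digits r M \<Longrightarrow> i < r \<Longrightarrow> \<bar>x i\<bar> \<le> M"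
  using digits_nat by fastforce

lemma digits_diff:
  assumes "x \<in> digits r M" "x' \<in> digits r M" "i < r"
  obtains k :: int where "x i - x' i = of_int k" "\<bar>k\<bar> \<le> M"
proof -
  obtain a a' where "a < M" "a' < M" "x i = real a" "x' i = real a'"
    using digits_nat assms by metis
  then show thesis by (intro that[of "int a - int a'"]) auto
qed

lemma card_digits: "card (digits r M) = M ^ r"
  by (simp add: digits_def card_PiE card_image)

context norm_fun
begin

lemma grid_point_bound:
  assumes UV: "\<And>i. i < r \<Longrightarrow> N (U i) \<le> B \<and> N (V i) \<le> B"
    and xy: "\<And>i. i < r \<Longrightarrow> \<bar>x i\<bar> \<le> M \<and> \<bar>y i\<bar> \<le> M"
    and head: "\<And>i. i < m \<Longrightarrow> x i = 0 \<and> y i = 0"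
    and \<tau>: "0 \<le> \<tau>" "\<tau> \<le> 1"
  shows "N (grid_point \<tau> r U V x y) \<le> real r * \<tau> ^ Suc m * (2 * M * B)"
proof -
  have term_le: "N (\<tau> ^ Suc i *\<^sub>R (x i *\<^sub>R U i + y i *\<^sub>R V i)) \<le> \<tau> ^ Suc m * (2 * M * B)"
    if "i < r" for i
  proof -
    have "0 \<le> M" "0 \<le> B" using xy[OF that] UV[OF that] N_nonneg[of "U i"] by linarith+
    show ?thesis
    proof (cases "i < m")
      case True
      then show ?thesis using head \<open>0 \<le> M\<close> \<open>0 \<le> B\<close> \<tau> by simp
    next
      case False
      have "N (x i *\<^sub>R U i + y i *\<^sub>R V i) \<le> \<bar>x i\<bar> * N (U i) + \<bar>y i\<bar> * N (V i)"
        using N_triangle[of "x i *\<^sub>R U i" "y i *\<^sub>R V i"] by (simp add: N_scaleR)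
      also have "\<dots> \<le> M * B + M * B"
        using xy[OF that] UV[OF that] by (intro add_mono mult_mono) (auto simp: N_nonneg)
      finally have "N (x i *\<^sub>R U i + y i *\<^sub>R V i) \<le> 2 * M * B" by (simp add: ac_simps)
      moreover have "\<tau> ^ Suc i \<le> \<tau> ^ Suc m" using False \<tau> by (intro power_decreasing) auto
      ultimately have "\<tau> ^ Suc i * N (x i *\<^sub>R U i + y i *\<^sub>R V i) \<le> \<tau> ^ Suc m * (2 * M * B)"
        using \<tau> \<open>0 \<le> M\<close> \<open>0 \<le> B\<close> by (intro mult_mono) (auto simp: N_nonneg)
      then show ?thesis using \<tau> by (simp add: N_scaleR)
    qed
  qed
  have "N (grid_point \<tau> r U V x y) \<le> (\<Sum>i<r. N (\<tau> ^ Suc i *\<^sub>R (x i *\<^sub>R U i + y i *\<^sub>R V i)))"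
    unfolding grid_point_def by (rule N_sum_le)
  also have "\<dots> \<le> (\<Sum>i<r. \<tau> ^ Suc m * (2 * M * B))"
    by (rule sum_mono) (use term_le in blast)
  finally show ?thesis by simp
qed

lemma grid_point_lower_bound:
  assumes lower: "\<And>i a c. i < r \<Longrightarrow> a \<in> \<int> \<Longrightarrow> c \<in> \<int> \<Longrightarrow> (a, c) \<noteq> (0, 0) \<Longrightarrow>
                     \<sigma> \<le> N (a *\<^sub>R U i + c *\<^sub>R V i)"
    and upper: "\<And>i. i < r \<Longrightarrow> N (U i) \<le> B \<and> N (V i) \<le> B"
    and coeffs: "\<And>i. i < r \<Longrightarrow> x i \<in> \<int> \<and> y i \<in> \<int> \<and> \<bar>x i\<bar> \<le> M \<and> \<bar>y i\<bar> \<le> M"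
    and nonzero: "\<exists>i<r. (x i, y i) \<noteq> (0, 0)"
    and \<tau>: "0 < \<tau>" "\<tau> \<le> 1" and "0 \<le> \<sigma>"
    and small: "real r * \<tau> * (2 * M * B) \<le> \<sigma> / 2"
  shows "\<tau> ^ r * \<sigma> / 2 \<le> N (grid_point \<tau> r U V x y)"
proof -
  define i0 where "i0 = (LEAST i. (x i, y i) \<noteq> (0, 0))"
  obtain i1 where i1: "i1 < r" "(x i1, y i1) \<noteq> (0, 0)" using nonzero by blast
  have i0: "(x i0, y i0) \<noteq> (0, 0)" "i0 < r"
  proof -
    show "(x i0, y i0) \<noteq> (0, 0)" unfolding i0_def by (rule LeastI[of _ i1]) (rule i1(2))
    have "i0 \<le> i1" unfolding i0_def by (rule Least_le) (rule i1(2))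
    then show "i0 < r" using i1(1) by simp
  qed
  have head: "x i = 0 \<and> y i = 0" if "i < i0" for i
    using not_less_Least[OF that[unfolded i0_def]] by simp
  have "0 \<le> M" using coeffs[OF i0(2)] by (meson abs_ge_zero order_trans)
  define lead where "lead = \<tau> ^ Suc i0 *\<^sub>R (x i0 *\<^sub>R U i0 + y i0 *\<^sub>R V i0)"
  define tail where "tail = grid_point \<tau> r U V (x(i0 := 0)) (y(i0 := 0))"
  have "N tail \<le> real r * \<tau> ^ Suc (Suc i0) * (2 * M * B)"
    unfolding tail_def
    by (rule grid_point_bound) (use upper coeffs head \<tau> \<open>0 \<le> M\<close> in \<open>auto simp: less_Suc_eq\<close>)
  also have "\<dots> = \<tau> ^ Suc i0 * (real r * \<tau> * (2 * M * B))" by (simp add: algebra_simps)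
  also have "\<dots> \<le> \<tau> ^ Suc i0 * (\<sigma> / 2)" using small \<tau> by (intro mult_left_mono) auto
  finally have tail_le: "N tail \<le> \<tau> ^ Suc i0 * \<sigma> / 2" by simp
  have "\<sigma> \<le> N (x i0 *\<^sub>R U i0 + y i0 *\<^sub>R V i0)"
    using coeffs[OF i0(2)] i0(1) by (intro lower[OF i0(2)]) auto
  then have "\<tau> ^ Suc i0 * \<sigma> \<le> N lead"
    unfolding lead_def using \<tau> by (simp add: N_scaleR)
  moreover have "grid_point \<tau> r U V x y = lead + tail"
    unfolding lead_def tail_def by (rule grid_point_split[OF i0(2)])
  ultimately have "\<tau> ^ Suc i0 * \<sigma> / 2 \<le> N (grid_point \<tau> r U V x y)"
    using N_triangle_reverse[of lead tail] tail_le by simp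
  moreover have "\<tau> ^ r * \<sigma> \<le> \<tau> ^ Suc i0 * \<sigma>"
    using \<tau> i0(2) \<open>0 \<le> \<sigma>\<close> by (intro mult_right_mono power_decreasing) auto
  ultimately show ?thesis by linarith
qed

lemma grid_point_separated:
  assumes lower: "\<And>i a c. i < r \<Longrightarrow> a \<in> \<int> \<Longrightarrow> c \<in> \<int> \<Longrightarrow> (a, c) \<noteq> (0, 0) \<Longrightarrow>
                     \<sigma> \<le> N (a *\<^sub>R U i + c *\<^sub>R V i)"
    and upper: "\<And>i. i < r \<Longrightarrow> N (U i) \<le> B \<and> N (V i) \<le> B"
    and \<tau>: "0 < \<tau>" "\<tau> \<le> 1" and "0 \<le> \<sigma>"
    and small: "real r * \<tau> * (2 * real M * B) \<le> \<sigma> / 2"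
    and xy: "x \<in> digits r M" "y \<in> digits r M" and xy': "x' \<in> digits r M" "y' \<in> digits r M"
    and "(x, y) \<noteq> (x', y')"
  shows "\<tau> ^ r * \<sigma> / 2 \<le> N (grid_point \<tau> r U V x y - grid_point \<tau> r U V x' y')"
  unfolding grid_point_diff
proof (rule grid_point_lower_bound[OF lower upper _ _ \<tau> \<open>0 \<le> \<sigma>\<close> small])
  have int_diff: "z i - z' i \<in> \<int> \<and> \<bar>z i - z' i\<bar> \<le> M"
    if z: "z \<in> digits r M" "z' \<in> digits r M" "i < r" for z z' i
  proof -
    obtain k :: int where "z i - z' i = of_int k" "\<bar>k\<bar> \<le> M"
      using digits_diff[OF z] .
    then show ?thesis by (metis Ints_of_int of_int_abs of_int_le_iff of_int_of_nat_eq)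
  qed
  fix i assume "i < r"
  then show "x i - x' i \<in> \<int> \<and> y i - y' i \<in> \<int> \<and> \<bar>x i - x' i\<bar> \<le> M \<and> \<bar>y i - y' i\<bar> \<le> M"
    using int_diff xy xy' by blast
next
  show "\<exists>i<r. (x i - x' i, y i - y' i) \<noteq> (0, 0)"
  proof (rule ccontr)
    assume "\<not> ?thesis"
    then have "x = x'" "y = y'"
      using xy xy' by (auto simp: digits_def intro: PiE_ext)
    then show False using \<open>(x, y) \<noteq> (x', y')\<close> by simp
  qed
qed auto

lemma card_grid:
  assumes lower: "\<And>i a c. i < r \<Longrightarrow> a \<in> \<int> \<Longrightarrow> c \<in> \<int> \<Longrightarrow> (a, c) \<noteq> (0, 0) \<Longrightarrow>
                     \<sigma> \<le> N (a *\<^sub>R U i + c *\<^sub>R V i)"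
    and upper: "\<And>i. i < r \<Longrightarrow> N (U i) \<le> B \<and> N (V i) \<le> B"
    and \<tau>: "0 < \<tau>" "\<tau> \<le> 1" and "0 < \<sigma>"
    and small: "real r * \<tau> * (2 * real M * B) \<le> \<sigma> / 2"
  shows "card (grid \<tau> r U V M) = M ^ (2 * r)"
proof -
  have "inj_on (\<lambda>(x, y). grid_point \<tau> r U V x y) (digits r M \<times> digits r M)"
  proof (rule inj_onI, rule ccontr)
    fix p q assume "p \<in> digits r M \<times> digits r M" "q \<in> digits r M \<times> digits r M" "p \<noteq> q"
      and eq: "(\<lambda>(x, y). grid_point \<tau> r U V x y) p = (\<lambda>(x, y). grid_point \<tau> r U V x y) q"
    then obtain x y x' y' where p: "p = (x, y)" and q: "q = (x', y')"
      and digits: "x \<in> digits r M" "y \<in> digits r M" "x' \<in> digits r M" "y' \<in> digits r M"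
      by auto
    have "\<tau> ^ r * \<sigma> / 2 \<le> N (grid_point \<tau> r U V x y - grid_point \<tau> r U V x' y')"
      using \<open>0 < \<sigma>\<close> digits \<open>p \<noteq> q\<close> unfolding p q
      by (intro grid_point_separated[OF lower upper \<tau> _ small]) auto
    also have "\<dots> = 0" using eq unfolding p q by simp
    finally have "\<tau> ^ r * \<sigma> / 2 \<le> 0" .
    moreover have "0 < \<tau> ^ r * \<sigma> / 2" using \<tau> \<open>0 < \<sigma>\<close> by simp
    ultimately show False by linarith
  qed
  then show ?thesis
    by (simp add: grid_def card_image card_cartesian_product card_digits mult_2 power_add)
qed

end

lemma grid_subset_cball:
  assumes "\<And>i. i < r \<Longrightarrow> norm (U i) \<le> E \<and> norm (V i) \<le> E"
    and "0 \<le> \<tau>" "\<tau> \<le> 1" and "real r * \<tau> * (2 * real M * E) \<le> 1 / 2"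
  shows "grid \<tau> r U V M \<subseteq> cball 0 (1 / 2)"
proof
  fix p assume "p \<in> grid \<tau> r U V M"
  then obtain x y where xy: "x \<in> digits r M" "y \<in> digits r M" and p: "p = grid_point \<tau> r U V x y"
    by (rule gridE)
  have "norm p \<le> real r * \<tau> ^ Suc 0 * (2 * real M * E)"
    unfolding p using assms(1-3) xy by (intro euclidean.grid_point_bound) (auto simp: digits_abs_le)
  then show "p \<in> cball 0 (1 / 2)" using assms(4) by simp
qed

lemma card_grid_projections_le:
  "card {(p - q) \<bullet> w | p q. p \<in> grid \<tau> r U V M \<and> q \<in> grid \<tau> r U V M}
     \<le> (2 * M + 1) ^ (card {i. i < r \<and> U i \<bullet> w \<noteq> 0} + card {i. i < r \<and> V i \<bullet> w \<noteq> 0})"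
proof -
  define S where "S W = {i. i < r \<and> W i \<bullet> w \<noteq> 0}" for W :: "nat \<Rightarrow> real^2"
  define Z where "Z = real_of_int ` {- int M..int M}"
  define h where "h = (\<lambda>(a, c). \<Sum>i<r. \<tau> ^ Suc i * (a i * (U i \<bullet> w) + c i * (V i \<bullet> w)))"
  have diff_Z: "x i - x' i \<in> Z" if x: "x \<in> digits r M" "x' \<in> digits r M" "i < r" for x x' i
  proof -
    obtain k :: int where "x i - x' i = of_int k" "\<bar>k\<bar> \<le> M" using digits_diff[OF x] .
    moreover have "k \<in> {- int M..int M}" using \<open>\<bar>k\<bar> \<le> M\<close> by auto
    ultimately show ?thesis unfolding Z_def by blast
  qed
  have "{(p - q) \<bullet> w | p q. p \<in> grid \<tau> r U V M \<and> q \<in> grid \<tau> r U V M}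
          \<subseteq> h ` ((S U \<rightarrow>\<^sub>E Z) \<times> (S V \<rightarrow>\<^sub>E Z))"
  proof clarify
    fix p q assume "p \<in> grid \<tau> r U V M" "q \<in> grid \<tau> r U V M"
    then obtain x y x' y' where digits: "x \<in> digits r M" "y \<in> digits r M" "x' \<in> digits r M" "y' \<in> digits r M"
      and p: "p = grid_point \<tau> r U V x y" and q: "q = grid_point \<tau> r U V x' y'"
      by (metis gridE)
    have "(p - q) \<bullet> w = grid_point \<tau> r U V (\<lambda>i. x i - x' i) (\<lambda>i. y i - y' i) \<bullet> w"
      unfolding p q grid_point_diff ..
    also have "\<dots> = (\<Sum>i<r. \<tau> ^ Suc i * ((x i - x' i) * (U i \<bullet> w) + (y i - y' i) * (V i \<bullet> w)))"
      by (simp add: grid_point_def inner_sum_left inner_add_left)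
    also have "\<dots> = h (restrict (\<lambda>i. x i - x' i) (S U), restrict (\<lambda>i. y i - y' i) (S V))"
      unfolding h_def S_def case_prod_conv by (intro sum.cong) auto
    finally show "(p - q) \<bullet> w \<in> h ` ((S U \<rightarrow>\<^sub>E Z) \<times> (S V \<rightarrow>\<^sub>E Z))"
      using diff_Z digits unfolding S_def by auto
  qed
  moreover have "finite ((S U \<rightarrow>\<^sub>E Z) \<times> (S V \<rightarrow>\<^sub>E Z))"
    unfolding S_def Z_def by (intro finite_cartesian_product finite_PiE) auto
  ultimately have "card {(p - q) \<bullet> w | p q. p \<in> grid \<tau> r U V M \<and> q \<in> grid \<tau> r U V M}
      \<le> card (h ` ((S U \<rightarrow>\<^sub>E Z) \<times> (S V \<rightarrow>\<^sub>E Z)))"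
    by (intro card_mono finite_imageI)
  also have "\<dots> \<le> card ((S U \<rightarrow>\<^sub>E Z) \<times> (S V \<rightarrow>\<^sub>E Z))"
    by (rule card_image_le) fact
  also have "\<dots> = (2 * M + 1) ^ (card (S U) + card (S V))"
  proof -
    have "card Z = 2 * M + 1" unfolding Z_def by (simp add: card_image inj_on_def)
    moreover have "finite (S U)" "finite (S V)" unfolding S_def by auto
    ultimately show ?thesis by (simp add: card_cartesian_product card_PiE power_add)
  qed
  finally show ?thesis unfolding S_def .
qed

lemma card_cyclic_grid_projections_le:
  assumes "j < r" "U j \<bullet> w = 0"
  shows "card {(p - q) \<bullet> w | p q. p \<in> grid \<tau> r U (\<lambda>i. U (Suc i mod r)) M \<and> q \<in> grid \<tau> r U (\<lambda>i. U (Suc i mod r)) M}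
           \<le> (2 * M + 1) ^ (2 * r - 2)"
proof -
  define j' where "j' = (j + r - 1) mod r"
  have "j' < r" "Suc j' mod r = j"
    using assms(1) by (auto simp: j'_def mod_Suc_eq)
  have "card {i. i < r \<and> W i \<bullet> w \<noteq> 0} \<le> r - 1" if "k < r" "W k \<bullet> w = 0" for W :: "nat \<Rightarrow> real^2" and k
  proof -
    have "{i. i < r \<and> W i \<bullet> w \<noteq> 0} \<subseteq> {..<r} - {k}" using that by auto
    then show ?thesis using that(1) by (metis card_Diff_singleton card_lessThan card_mono finite_Diff finite_lessThan lessThan_iff)
  qed
  from this[of j U] this[of j' "\<lambda>i. U (Suc i mod r)"]
  have "card {i. i < r \<and> U i \<bullet> w \<noteq> 0} + card {i. i < r \<and> U (Suc i mod r) \<bullet> w \<noteq> 0} \<le> 2 * r - 2"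
    using assms \<open>j' < r\<close> \<open>Suc j' mod r = j\<close> by simp
  then show ?thesis
    by (intro order_trans[OF card_grid_projections_le] power_increasing) auto
qed

context norm_fun
begin

lemma cyclic_grid_properties:
  fixes U :: "nat \<Rightarrow> real^2"
  assumes "1 \<le> r" "1 \<le> M" "0 < \<sigma>"
    and lower: "\<And>i a c. i < r \<Longrightarrow> a \<in> \<int> \<Longrightarrow> c \<in> \<int> \<Longrightarrow> (a, c) \<noteq> (0, 0) \<Longrightarrow>
                   \<sigma> \<le> N (a *\<^sub>R U i + c *\<^sub>R U (Suc i mod r))"
    and bounds: "\<And>i. i < r \<Longrightarrow> N (U i) \<le> B \<and> norm (U i) \<le> E"
    and \<rho>: "0 < \<rho>" "\<rho> \<le> 1" "\<rho> * B \<le> \<sigma>" "\<rho> * E \<le> 1"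
  defines "A \<equiv> grid (\<rho> / (4 * real r * real M)) r U (\<lambda>i. U (Suc i mod r)) M"
  shows "finite A" and "card A = M ^ (2 * r)" and "A \<subseteq> cball 0 (1 / 2)"
    and "\<And>w j. j < r \<Longrightarrow> U j \<bullet> w = 0 \<Longrightarrow>
           card {(a - a') \<bullet> w | a a'. a \<in> A \<and> a' \<in> A} \<le> (2 * M + 1) ^ (2 * r - 2)"
    and "\<And>x x'. x \<in> A \<Longrightarrow> x' \<in> A \<Longrightarrow> x \<noteq> x' \<Longrightarrow>
           (\<rho> / (4 * real r)) ^ r * \<sigma> / 2 / real M ^ r \<le> N (x - x')"
proof -
  define \<tau> where "\<tau> = \<rho> / (4 * real r * real M)"
  define V where "V = (\<lambda>i. U (Suc i mod r))"
  have A_eq: "A = grid \<tau> r U V M" unfolding A_def \<tau>_def V_def ..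
  have lower_V: "\<sigma> \<le> N (a *\<^sub>R U i + c *\<^sub>R V i)"
    if "i < r" "a \<in> \<int>" "c \<in> \<int>" "(a, c) \<noteq> (0, 0)" for i a c
    unfolding V_def using that by (rule lower)
  have "Suc i mod r < r" for i using \<open>1 \<le> r\<close> by simp
  then have upper: "N (U i) \<le> B \<and> N (V i) \<le> B" and bounded: "norm (U i) \<le> E \<and> norm (V i) \<le> E"
    if "i < r" for i
    unfolding V_def using bounds that by blast+
  have "1 \<le> 4 * real r * real M" using assms(1,2) by (intro mult_ge1_I) auto
  then have \<tau>: "0 < \<tau>" "\<tau> \<le> 1"
    using \<rho> assms(1,2) by (auto simp: \<tau>_def zero_less_divide_iff divide_le_eq_1)
  have small: "real r * \<tau> * (2 * real M * B) \<le> \<sigma> / 2" "real r * \<tau> * (2 * real M * E) \<le> 1 / 2"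
    using \<rho> assms(1,2) by (auto simp: \<tau>_def field_simps)
  show card_A: "card A = M ^ (2 * r)"
    unfolding A_eq using \<tau> \<open>0 < \<sigma>\<close> by (intro card_grid[OF lower_V upper _ _ _ small(1)])
  then show "finite A" using \<open>1 \<le> M\<close> by (intro card_ge_0_finite) simp
  show "A \<subseteq> cball 0 (1 / 2)"
    unfolding A_eq using bounded \<tau> small(2) by (intro grid_subset_cball) auto
  show "card {(a - a') \<bullet> w | a a'. a \<in> A \<and> a' \<in> A} \<le> (2 * M + 1) ^ (2 * r - 2)"
    if "j < r" "U j \<bullet> w = 0" for w j
    unfolding A_def using that by (rule card_cyclic_grid_projections_le)
  show "(\<rho> / (4 * real r)) ^ r * \<sigma> / 2 / real M ^ r \<le> N (x - x')"
    if "x \<in> A" "x' \<in> A" "x \<noteq> x'" for x x'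
  proof -
    obtain u v u' v' where uv: "u \<in> digits r M" "v \<in> digits r M" "u' \<in> digits r M" "v' \<in> digits r M"
      and x: "x = grid_point \<tau> r U V u v" and x': "x' = grid_point \<tau> r U V u' v'"
      using \<open>x \<in> A\<close> \<open>x' \<in> A\<close> unfolding A_eq by (metis gridE)
    have "(u, v) \<noteq> (u', v')" using \<open>x \<noteq> x'\<close> unfolding x x' by auto
    then have "\<tau> ^ r * \<sigma> / 2 \<le> N (x - x')"
      unfolding x x' using uv \<open>0 < \<sigma>\<close>
      by (intro grid_point_separated[OF lower_V upper \<tau> _ small(1)]) auto
    moreover have "(\<rho> / (4 * real r)) ^ r * \<sigma> / 2 / real M ^ r = \<tau> ^ r * \<sigma> / 2"
      unfolding \<tau>_def by (simp add: power_divide power_mult_distrib)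
    ultimately show ?thesis by linarith
  qed
qed

end

lemma power_powr_neg_half:
  assumes "0 < M"
  shows "real (M ^ (2 * r)) powr (- 1 / 2) = 1 / real M ^ r"
proof -
  have "real (M ^ (2 * r)) = (real M ^ r)\<^sup>2"
    by (simp add: power_mult[symmetric] mult.commute)
  then show ?thesis
    using assms by (simp add: powr_minus_divide powr_half_sqrt)
qed

lemma power_le_powr_one_minus_inverse:
  assumes "1 \<le> M" "1 \<le> r" "r \<le> K"
  shows "real ((2 * M + 1) ^ (2 * r - 2)) \<le> 9 ^ K * real (M ^ (2 * r)) powr (1 - 1 / real K)"
proof -
  have "real (M ^ (2 * r)) powr (1 - 1 / real r) = real M powr (real (2 * r) * (1 - 1 / real r))"
    using assms(1) by (simp add: powr_realpow[symmetric] powr_powr)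
  also have "real (2 * r) * (1 - 1 / real r) = real (2 * r - 2)"
    using assms(2) by (simp add: field_simps)
  finally have n_powr: "real (M ^ (2 * r)) powr (1 - 1 / real r) = real M ^ (2 * r - 2)"
    using assms(1) by (simp add: powr_realpow)
  have "real (2 * M + 1) \<le> 3 * real M" using assms(1) by simp
  then have "real ((2 * M + 1) ^ (2 * r - 2)) \<le> (3 * real M) ^ (2 * r - 2)"
    unfolding of_nat_power by (rule power_mono) simp
  also have "\<dots> = 3 ^ (2 * r - 2) * real M ^ (2 * r - 2)"
    by (simp add: power_mult_distrib)
  also have "\<dots> \<le> 9 ^ K * real M ^ (2 * r - 2)"
  proof (rule mult_right_mono)
    have "(3::real) ^ (2 * r - 2) \<le> 3 ^ (2 * K)" using assms by (intro power_increasing) auto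
    then show "(3::real) ^ (2 * r - 2) \<le> 9 ^ K" by (simp add: power_mult)
  qed simp
  also have "real M ^ (2 * r - 2) \<le> real (M ^ (2 * r)) powr (1 - 1 / real K)"
    unfolding n_powr[symmetric] using assms by (intro powr_mono) (auto simp: frac_le)
  finally show ?thesis by simp
qed

context polygon_norm
begin

lemma exists_sparse_separated_grid:
  obtains r :: nat and c :: real where "2 \<le> r" "r \<le> card I" "0 < c"
    "\<And>M. 1 \<le> M \<Longrightarrow> \<exists>A. finite A \<and> card A = M ^ (2 * r) \<and> A \<subseteq> cball 0 (1 / 2) \<and>
        (\<forall>k\<in>I. card {(a - a') \<bullet> b k | a a'. a \<in> A \<and> a' \<in> A} \<le> (2 * M + 1) ^ (2 * r - 2)) \<and>
        (\<forall>x\<in>A. \<forall>x'\<in>A. x \<noteq> x' \<longrightarrow> c / real M ^ r \<le> N (x - x'))"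
proof -
  obtain r U \<sigma> where r: "2 \<le> r" "r \<le> card I" and "0 < \<sigma>"
    and lower: "\<And>i a c. i < r \<Longrightarrow> a \<in> \<int> \<Longrightarrow> c \<in> \<int> \<Longrightarrow> (a, c) \<noteq> (0, 0) \<Longrightarrow>
                   \<sigma> \<le> N (a *\<^sub>R U i + c *\<^sub>R U (Suc i mod r))"
    and cover: "\<And>k. k \<in> I \<Longrightarrow> \<exists>j<r. U j \<bullet> b k = 0"
    by (rule cyclic_perp_frame) (rule that)
  define B where "B = (MAX i\<in>{..<r}. N (U i))"
  define E where "E = (MAX i\<in>{..<r}. norm (U i))"
  have bounds: "N (U i) \<le> B \<and> norm (U i) \<le> E" if "i < r" for i
    unfolding B_def E_def using that by (auto intro!: Max_ge)
  have "\<sigma> \<le> N (U 0)" using lower[of 0 1 0] r by simp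
  then have "\<sigma> \<le> B" using bounds[of 0] r by simp
  have "U 0 \<noteq> 0" using \<open>\<sigma> \<le> N (U 0)\<close> \<open>0 < \<sigma>\<close> by auto
  moreover have "norm (U 0) \<le> E" using bounds[of 0] r by simp
  ultimately have "0 < E" by (meson order.strict_trans2 zero_less_norm_iff)
  define \<rho> where "\<rho> = min (\<sigma> / B) (1 / E)"
  have "0 < B" "\<sigma> / B \<le> 1" using \<open>0 < \<sigma>\<close> \<open>\<sigma> \<le> B\<close> by simp_all
  have "\<rho> \<le> \<sigma> / B" "\<rho> \<le> 1 / E" by (simp_all add: \<rho>_def)
  have \<rho>: "0 < \<rho>" "\<rho> \<le> 1" "\<rho> * B \<le> \<sigma>" "\<rho> * E \<le> 1"
  proof -
    show "0 < \<rho>" using \<open>0 < \<sigma>\<close> \<open>0 < B\<close> \<open>0 < E\<close> by (simp add: \<rho>_def)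
    show "\<rho> \<le> 1" using \<open>\<rho> \<le> \<sigma> / B\<close> \<open>\<sigma> / B \<le> 1\<close> by linarith
    show "\<rho> * B \<le> \<sigma>" using \<open>\<rho> \<le> \<sigma> / B\<close> \<open>0 < B\<close> by (simp add: le_divide_eq)
    show "\<rho> * E \<le> 1" using \<open>\<rho> \<le> 1 / E\<close> \<open>0 < E\<close> by (simp add: le_divide_eq)
  qed
  show thesis
  proof (rule that[OF r, of "(\<rho> / (4 * real r)) ^ r * \<sigma> / 2"], goal_cases)
    case 1
    show ?case using \<rho> \<open>0 < \<sigma>\<close> r by simp
  next
    case (2 M)
    have "1 \<le> r" using r by simp
    note A = cyclic_grid_properties[where r = r and U = U and \<sigma> = \<sigma>, OF \<open>1 \<le> r\<close> 2 \<open>0 < \<sigma>\<close> lower bounds \<rho>]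
    show ?case
      using A(1-3) A(4)[of _ "b _"] A(5) cover
      by (intro exI[of _ "grid (\<rho> / (4 * real r * real M)) r U (\<lambda>i. U (Suc i mod r)) M"]) blast
  qed
qed

lemma exists_sparse_separated_sets:
  "\<exists>C>0. \<exists>C'>0. \<exists>c>0. \<forall>n0::nat. \<exists>n\<ge>n0. \<exists>A :: (real^2) set.
     finite A \<and> card A = n \<and> A \<subseteq> cball 0 (1/2) \<and>
     (\<forall>k\<in>I. real (card {(a - a') \<bullet> b k | a a'. a \<in> A \<and> a' \<in> A})
         \<le> C * real n powr (1 - 1 / real (card I))) \<and>
     real (card {N (x - x') | x x'. x \<in> A \<and> x' \<in> A}) \<le> C' * real n powr (1 - 1 / real (card I)) \<and>
     (\<forall>x\<in>A. \<forall>x'\<in>A. x \<noteq> x' \<longrightarrow> N (x - x') \<ge> c * real n powr (- 1 / 2))"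
proof -
  obtain r c where r: "2 \<le> r" "r \<le> card I" and "0 < c"
    and grid: "\<And>M. 1 \<le> M \<Longrightarrow> \<exists>A. finite A \<and> card A = M ^ (2 * r) \<and> A \<subseteq> cball 0 (1 / 2) \<and>
        (\<forall>k\<in>I. card {(a - a') \<bullet> b k | a a'. a \<in> A \<and> a' \<in> A} \<le> (2 * M + 1) ^ (2 * r - 2)) \<and>
        (\<forall>x\<in>A. \<forall>x'\<in>A. x \<noteq> x' \<longrightarrow> c / real M ^ r \<le> N (x - x'))"
    by (rule exists_sparse_separated_grid) (rule that)
  define L where "L n = 9 ^ card I * real n powr (1 - 1 / real (card I))" for n :: nat
  have "\<exists>n\<ge>n0. \<exists>A :: (real^2) set. finite A \<and> card A = n \<and> A \<subseteq> cball 0 (1/2) \<and>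
          (\<forall>k\<in>I. real (card {(a - a') \<bullet> b k | a a'. a \<in> A \<and> a' \<in> A}) \<le> L n) \<and>
          real (card {N (x - x') | x x'. x \<in> A \<and> x' \<in> A}) \<le> real (card I) * L n \<and>
          (\<forall>x\<in>A. \<forall>x'\<in>A. x \<noteq> x' \<longrightarrow> N (x - x') \<ge> c * real n powr (- 1 / 2))" for n0
  proof -
    define M where "M = Suc n0"
    define n where "n = M ^ (2 * r)"
    obtain A where A: "finite A" "card A = n" "A \<subseteq> cball 0 (1 / 2)"
      and proj: "\<And>k. k \<in> I \<Longrightarrow> card {(a - a') \<bullet> b k | a a'. a \<in> A \<and> a' \<in> A} \<le> (2 * M + 1) ^ (2 * r - 2)"
      and sep: "\<And>x x'. x \<in> A \<Longrightarrow> x' \<in> A \<Longrightarrow> x \<noteq> x' \<Longrightarrow> c / real M ^ r \<le> N (x - x')"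
      using grid[of M] unfolding n_def M_def by auto
    have proj_L: "real (card {(a - a') \<bullet> b k | a a'. a \<in> A \<and> a' \<in> A}) \<le> L n" if "k \<in> I" for k
    proof -
      have "real (card {(a - a') \<bullet> b k | a a'. a \<in> A \<and> a' \<in> A}) \<le> real ((2 * M + 1) ^ (2 * r - 2))"
        using proj[OF that] by (simp only: of_nat_le_iff)
      also have "\<dots> \<le> L n"
        unfolding n_def L_def by (rule power_le_powr_one_minus_inverse) (use r in \<open>auto simp: M_def\<close>)
      finally show ?thesis .
    qed
    have "real n powr (- 1 / 2) = 1 / real M ^ r"
      unfolding n_def by (rule power_powr_neg_half) (simp add: M_def)
    then have "c * real n powr (- 1 / 2) = c / real M ^ r" by simp
    moreover have "M \<le> n" unfolding n_def using r by (intro self_le_power) (auto simp: M_def)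
    ultimately show ?thesis
      using A proj_L card_distances_le[OF A(1) proj_L] sep
      by (intro exI[of _ n] exI[of _ A]) (auto simp: M_def)
  qed
  moreover have "0 < (9::real) ^ card I" "0 < real (card I) * 9 ^ card I"
    using finite_I I_nonempty by (auto simp: card_gt_0_iff)
  ultimately show ?thesis
    using \<open>0 < c\<close> unfolding L_def mult.assoc[symmetric] by blast
qed

end

theorem lemma1p1:
  fixes K :: nat and b :: "nat \<Rightarrow> real^2" and N :: "real^2 \<Rightarrow> real"
  assumes K4: "K \<ge> 4"
    and normN: "is_norm_fun N"
    and ball: "{x. N x \<le> 1} = (\<Inter>k\<in>{1..K}. {x. \<bar>x \<bullet> b k\<bar> \<le> 1})"
    and sides: "card {F. F facet_of {x. N x \<le> 1}} = 2 * K"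
  shows "\<exists>C>0. \<exists>C'>0. \<exists>c>0. \<forall>n0::nat. \<exists>n\<ge>n0. \<exists>A :: (real^2) set.
           finite A \<and> card A = n \<and> A \<subseteq> cball 0 (1/2) \<and>
           (\<forall>k\<in>{1..K}. real (card {(a - a') \<bullet> b k | a a'. a \<in> A \<and> a' \<in> A})
               \<le> C * real n powr (1 - 1 / real K)) \<and>
           real (card {N (x - x') | x x'. x \<in> A \<and> x' \<in> A}) \<le> C' * real n powr (1 - 1 / real K) \<and>
           (\<forall>x\<in>A. \<forall>x'\<in>A. x \<noteq> x' \<longrightarrow> N (x - x') \<ge> c * real n powr (- 1 / 2))"
proof -
  interpret polygon_norm N "{1..K}" b
    using K4 normN ball by unfold_locales auto
  show ?thesis
    using exists_sparse_separated_sets by simp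
qed

end
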